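(* Let $A$ be a set of agents and let $x$ be an agent with $x \notin A$. Suppose $PC(A,\phi)$ holds and all agents are honest (they communicate only truths). Suppose further that for some agent $v_x \in A$ the following two communications take place: $v_x$ communicates to $x$ the fact $PC(A,\phi)$, and $v_x$ communicates to every member of $A$ the fact $K_x\,\phi$. Then $PC(A \cup \{x\},\phi)$ holds.
   Context: The setting is epistemic (temporal) logic over a set of agents. For an agent $x$ and predicate $\phi$, $K_x\,\phi$ means "agent $x$ knows $\phi$"; only truths can be known (if $K_x\,\phi$ then $\phi$). Public certifiability of a fact $\phi$ among a set $A$ of agents is defined by $PC(A,\phi) :\iff \forall x,y \in A,\ K_x K_y\,\phi$. A communication "$v \to B : \psi$" means agent $v$ tells the fact $\psi$ to the agents in $B$; since agents are honest, a recipient of such a communication (with delivery assumed, i.e. liveness) comes to know $\psi$. *)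

theory Defs
  imports Main
begin

text \<open>Kripke semantics of knowledge. Worlds (global states at a time point) have type 'w,
  agents type 'a; R a is agent a's indistinguishability relation. Predicates are
  world-dependent propositions.\<close>

definition K :: "('a \<Rightarrow> 'w \<Rightarrow> 'w \<Rightarrow> bool) \<Rightarrow> 'a \<Rightarrow> ('w \<Rightarrow> bool) \<Rightarrow> 'w \<Rightarrow> bool" where
  "K R x \<phi> = (\<lambda>w. \<forall>w'. R x w w' \<longrightarrow> \<phi> w')"

definition PC :: "('a \<Rightarrow> 'w \<Rightarrow> 'w \<Rightarrow> bool) \<Rightarrow> 'a set \<Rightarrow> ('w \<Rightarrow> bool) \<Rightarrow> 'w \<Rightarrow> bool" where
  "PC R A \<phi> = (\<lambda>w. \<forall>x\<in>A. \<forall>y\<in>A. K R x (K R y \<phi>) w)"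

text \<open>Effect of the communication v \<rightarrow> B : \<psi> (evaluated after it took place):
  honesty -- the sender only tells what it knows (hence a truth);
  liveness -- every recipient comes to know \<psi>.\<close>

definition comm :: "('a \<Rightarrow> 'w \<Rightarrow> 'w \<Rightarrow> bool) \<Rightarrow> 'a \<Rightarrow> 'a set \<Rightarrow> ('w \<Rightarrow> bool) \<Rightarrow> 'w \<Rightarrow> bool" where
  "comm R v B \<psi> w = (K R v \<psi> w \<and> (\<forall>b\<in>B. K R b \<psi> w))"

end

theory Submission
  imports Defs
begin

text \<open>Every member of A already knows that every member of A knows \<open>\<phi>\<close>, and the second
  message tells it that x knows \<open>\<phi>\<close>. Agent x learns \<open>PC(A,\<phi>)\<close>; since \<open>v \<in> A\<close>, this
  implies both \<open>\<phi>\<close> and \<open>K\<^sub>a \<phi>\<close> for every \<open>a \<in> A\<close>, so x knows these facts, and positive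
  introspection turns \<open>K\<^sub>x \<phi>\<close> into \<open>K\<^sub>x K\<^sub>x \<phi>\<close>.\<close>

lemma K_mono:
  assumes "\<And>u. \<phi> u \<Longrightarrow> \<psi> u" and "K R a \<phi> w"
  shows "K R a \<psi> w"
  using assms by (simp add: K_def)

lemma K_imp_truth:
  assumes "reflp (R a)" and "K R a \<phi> w"
  shows "\<phi> w"
  using assms by (simp add: K_def reflp_def)

lemma K_imp_K_K:
  assumes "transp (R a)" and "K R a \<phi> w"
  shows "K R a (K R a \<phi>) w"
  using assms unfolding K_def transp_def by blast

lemma PC_imp_K:
  assumes "\<And>a. reflp (R a)" and "PC R A \<phi> w" and "b \<in> A"
  shows "K R b \<phi> w"
proof -
  have "K R b (K R b \<phi>) w"
    using assms(2,3) by (simp add: PC_def)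
  then show ?thesis
    by (rule K_imp_truth[OF assms(1)])
qed

lemma PC_imp_truth:
  assumes "\<And>a. reflp (R a)" and "PC R A \<phi> w" and "A \<noteq> {}"
  shows "\<phi> w"
proof -
  obtain b where "b \<in> A"
    using assms(3) by blast
  then have "K R b \<phi> w"
    by (rule PC_imp_K[OF assms(1,2)])
  then show ?thesis
    by (rule K_imp_truth[OF assms(1)])
qed

lemma PC_insert_iff:
  "PC R (insert x A) \<phi> w \<longleftrightarrow>
     PC R A \<phi> w \<and> K R x (K R x \<phi>) w \<and>
     (\<forall>a\<in>A. K R a (K R x \<phi>) w \<and> K R x (K R a \<phi>) w)"
  by (auto simp: PC_def)

lemma comm_imp_K:
  assumes "comm R v B \<psi> w" and "b \<in> B"
  shows "K R b \<psi> w"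
  using assms by (simp add: comm_def)

theorem lemma1:
  fixes R :: "'a \<Rightarrow> 'w \<Rightarrow> 'w \<Rightarrow> bool" and A :: "'a set" and x v :: 'a
    and \<phi> :: "'w \<Rightarrow> bool" and w :: 'w
  assumes S5: "\<And>a. equivp (R a)"
    and "x \<notin> A"
    and "PC R A \<phi> w"
    and "v \<in> A"
    and "comm R v {x} (PC R A \<phi>) w"
    and "comm R v A (K R x \<phi>) w"
  shows "PC R (A \<union> {x}) \<phi> w"
proof -
  have refl: "\<And>a. reflp (R a)" and trans: "\<And>a. transp (R a)"
    using S5 by (simp_all add: equivp_reflp_symp_transp)
  have x_knows_PC: "K R x (PC R A \<phi>) w"
    using assms(5) by (rule comm_imp_K) simp
  have x_knows_\<phi>: "K R x \<phi> w"
    using \<open>v \<in> A\<close> by (intro K_mono[OF _ x_knows_PC] PC_imp_truth[OF refl]) auto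
  have "K R x (K R a \<phi>) w" if "a \<in> A" for a
    by (rule K_mono[OF _ x_knows_PC]) (rule PC_imp_K[OF refl _ that])
  moreover have "K R a (K R x \<phi>) w" if "a \<in> A" for a
    using assms(6) that by (rule comm_imp_K)
  ultimately show ?thesis
    unfolding Un_insert_right Un_empty_right PC_insert_iff
    using \<open>PC R A \<phi> w\<close> K_imp_K_K[OF trans x_knows_\<phi>] by blast
qed

end
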